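(* Let $\mathcal M$ be a map and let $e\neq f$ be edges of $\mathcal M$. If $\mathcal M\setminus e/ f$ is defined (i.e. $e$ is not a bridge of $\mathcal M$ and $f$ is not a separating loop of $\mathcal M\setminus e$), then $\mathcal M/ f\setminus e$ is defined (i.e. $f$ is not a separating loop of $\mathcal M$ and $e$ is not a bridge of $\mathcal M/f$) and $\mathcal M\setminus e/ f=\mathcal M/ f\setminus e$.
   Context: A map is a triple $\mathcal M=(B,\sigma,\alpha)$ with $B$ finite, $\sigma,\alpha\in\mathrm{Sym}(B)$, $\alpha$ a fixed-point-free involution, and $\langle\sigma,\alpha\rangle$ transitive on $B$; permutations compose as functions. Edges are the cycles of $\alpha$, vertices the cycles of $\sigma$. The underlying graph $G(\mathcal M)$ has vertices the cycles of $\sigma$ and edges the cycles of $\alpha$, $e$ incident to $v$ iff $e\cap v\neq\emptyset$. The dual map is $\mathcal M^\ast=(B,\sigma\alpha,\alpha)$. A bridge of $\mathcal M$ is an edge $e$ with $G(\mathcal M)-e$ disconnected; a separating loop is an edge $e$ with $G(\mathcal M^\ast)-e$ disconnected. For $\mu\in\mathrm{Sym}(B)$ and $B'\subseteq B$, $\mu_{|B'}\in\mathrm{Sym}(B')$ is defined by $\mu_{|B'}(b)=\mu^k(b)$, $k$ least positive with $\mu^k(b)\in B'$. For an edge $e$ that is not a bridge, deletion is $\mathcal M\setminus e=(B\setminus e,\sigma_{|B\setminus e},\alpha_{|B\setminus e})$; for an edge $e$ that is not a separating loop, contraction is $\mathcal M/e=(B\setminus e,(\sigma\alpha)_{|B\setminus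 e}\,\alpha_{|B\setminus e},\alpha_{|B\setminus e})$. *)

theory Defs
  imports "HOL-Combinatorics.Permutations"
begin

type_synonym 'a cmap = "'a set \<times> ('a \<Rightarrow> 'a) \<times> ('a \<Rightarrow> 'a)"

definition darts :: "'a cmap \<Rightarrow> 'a set" where "darts M = fst M"
definition vperm :: "'a cmap \<Rightarrow> ('a \<Rightarrow> 'a)" where "vperm M = fst (snd M)"
definition eperm :: "'a cmap \<Rightarrow> ('a \<Rightarrow> 'a)" where "eperm M = snd (snd M)"

text \<open>Transitivity of the group generated by sigma and alpha on B: any two darts
  are related by the equivalence closure of the one-step relations.\<close>
definition gen_step :: "('a \<Rightarrow> 'a) \<Rightarrow> ('a \<Rightarrow> 'a) \<Rightarrow> ('a \<times> 'a) set" where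
  "gen_step s a = {(b, s b) | b. True} \<union> {(s b, b) | b. True}
                 \<union> {(b, a b) | b. True} \<union> {(a b, b) | b. True}"

definition is_map :: "'a cmap \<Rightarrow> bool" where
  "is_map M \<longleftrightarrow> (let B = darts M; s = vperm M; a = eperm M in
     finite B \<and> s permutes B \<and> a permutes B \<and>
     (\<forall>b\<in>B. a b \<noteq> b \<and> a (a b) = b) \<and>
     (\<forall>x\<in>B. \<forall>y\<in>B. (x, y) \<in> (gen_step s a)\<^sup>*))"

definition perm_orbit :: "('a \<Rightarrow> 'a) \<Rightarrow> 'a \<Rightarrow> 'a set" where
  "perm_orbit p b = {(p ^^ n) b | n. True}"

definition edges :: "'a cmap \<Rightarrow> 'a set set" where
  "edges M = {perm_orbit (eperm M) b | b. b \<in> darts M}"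

definition vertices :: "'a cmap \<Rightarrow> 'a set set" where
  "vertices M = {perm_orbit (vperm M) b | b. b \<in> darts M}"

text \<open>Connectivity of the underlying graph G(M) with edge e removed
  (vertices kept; incidence = nonempty intersection).\<close>
definition adj_without :: "'a cmap \<Rightarrow> 'a set \<Rightarrow> ('a set \<times> 'a set) set" where
  "adj_without M e = {(v, w). v \<in> vertices M \<and> w \<in> vertices M \<and>
      (\<exists>e'\<in>edges M - {e}. e' \<inter> v \<noteq> {} \<and> e' \<inter> w \<noteq> {})}"

definition connected_without :: "'a cmap \<Rightarrow> 'a set \<Rightarrow> bool" where
  "connected_without M e \<longleftrightarrow>
     (\<forall>v\<in>vertices M. \<forall>w\<in>vertices M. (v, w) \<in> (adj_without M e)\<^sup>*)"

definition is_bridge :: "'a cmap \<Rightarrow> 'a set \<Rightarrow> bool" where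
  "is_bridge M e \<longleftrightarrow> e \<in> edges M \<and> \<not> connected_without M e"

definition dual :: "'a cmap \<Rightarrow> 'a cmap" where
  "dual M = (darts M, vperm M \<circ> eperm M, eperm M)"

definition is_sep_loop :: "'a cmap \<Rightarrow> 'a set \<Rightarrow> bool" where
  "is_sep_loop M e \<longleftrightarrow> is_bridge (dual M) e"

definition restr :: "('a \<Rightarrow> 'a) \<Rightarrow> 'a set \<Rightarrow> ('a \<Rightarrow> 'a)" where
  "restr \<mu> B' = (\<lambda>b. if b \<in> B' then (\<mu> ^^ (LEAST k. 0 < k \<and> (\<mu> ^^ k) b \<in> B')) b else b)"

definition delete :: "'a cmap \<Rightarrow> 'a set \<Rightarrow> 'a cmap" where
  "delete M e = (darts M - e, restr (vperm M) (darts M - e), restr (eperm M) (darts M - e))"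

definition contract :: "'a cmap \<Rightarrow> 'a set \<Rightarrow> 'a cmap" where
  "contract M e = (darts M - e,
      restr (vperm M \<circ> eperm M) (darts M - e) \<circ> restr (eperm M) (darts M - e),
      restr (eperm M) (darts M - e))"

end

theory Submission
  imports Defs "HOL-Combinatorics.Cycles"
begin

text \<open>
  Deletion and contraction only ever restrict a permutation to a set of darts; restricting
  twice is restricting once, and \<open>\<sigma>|\<^sub>S \<alpha>|\<^sub>S = (\<sigma> \<alpha>|\<^sub>S)|\<^sub>S\<close> when \<open>\<alpha>\<close> preserves \<open>S\<close>.
  Both \<open>M \<setminus> e / f\<close> and \<open>M / f \<setminus> e\<close> therefore have the darts \<open>B - e - f\<close>, the
  edge involution \<open>\<alpha>\<close> and, as vertex rotation, the restriction of the single permutation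
  which is \<open>\<sigma> \<alpha>\<close> on \<open>f\<close> and \<open>\<sigma>\<close> elsewhere.

  Connectivity of \<open>G(N) - g\<close> is the same as connectivity of the darts under the steps
  \<open>x \<mapsto> \<sigma> x\<close> and, for \<open>x \<notin> g\<close>, \<open>x \<mapsto> \<alpha> x\<close>. A step of the dual of \<open>M \<setminus> e\<close> is a walk in
  the dual of \<open>M\<close> avoiding \<open>f\<close>; together with the connectivity of \<open>M\<close> this shows that
  \<open>f\<close> is not a separating loop of \<open>M\<close>. Conversely, sending each dart of \<open>f\<close> to the first
  dart outside \<open>f\<close> on its vertex of \<open>M / f\<close> maps walks of \<open>M\<close> and of the dual of \<open>M \<setminus> e\<close>
  that avoid \<open>e\<close> resp. \<open>f\<close> to walks of \<open>M / f\<close> avoiding \<open>e\<close>, so \<open>e\<close> is not a bridge there.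
\<close>

section \<open>First hits and induced permutations\<close>

lemma permutes_funpow_id:
  assumes "finite B" "p permutes B"
  obtains n where "p ^^ n = id" "n > 0"
  using permutation_is_nilpotent[OF permutes_imp_permutation[OF assms]] .

lemma permutes_funpow_return:
  assumes "finite B" "p permutes B"
  obtains n where "n > 0" "(p ^^ n) x = x"
proof -
  obtain n where "p ^^ n = id" "n > 0" using permutes_funpow_id[OF assms] .
  then show ?thesis using that[of n] by simp
qed

lemma permutes_funpow_back:
  assumes "finite B" "p permutes B"
  obtains n where "(p ^^ n) (p x) = x"
proof -
  obtain n where "n > 0" "(p ^^ n) x = x" using permutes_funpow_return[OF assms] .
  then obtain n' where "n = Suc n'" by (cases n) auto
  then have "(p ^^ n') (p x) = x" using \<open>(p ^^ n) x = x\<close> by (simp add: funpow_swap1)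
  then show ?thesis by (rule that)
qed

text \<open>If the orbit of \<open>y\<close> never meets \<open>S\<close>, \<open>first_hit \<mu> S y\<close> is an unspecified iterate
  of \<open>y\<close>.\<close>

definition first_hit :: "('a \<Rightarrow> 'a) \<Rightarrow> 'a set \<Rightarrow> 'a \<Rightarrow> 'a" where
  "first_hit \<mu> S y = (\<mu> ^^ (LEAST k. (\<mu> ^^ k) y \<in> S)) y"

lemma first_hit_eqI:
  assumes "(\<mu> ^^ k) y \<in> S" "\<And>j. j < k \<Longrightarrow> (\<mu> ^^ j) y \<notin> S"
  shows "first_hit \<mu> S y = (\<mu> ^^ k) y"
proof -
  have "(LEAST k. (\<mu> ^^ k) y \<in> S) = k"
    by (rule Least_equality) (use assms not_less in auto)
  then show ?thesis unfolding first_hit_def by simp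
qed

lemma first_hitE:
  assumes "(\<mu> ^^ k) y \<in> S"
  obtains m where "m \<le> k" "first_hit \<mu> S y = (\<mu> ^^ m) y" "(\<mu> ^^ m) y \<in> S"
    "\<And>j. j < m \<Longrightarrow> (\<mu> ^^ j) y \<notin> S"
proof
  let ?m = "LEAST k. (\<mu> ^^ k) y \<in> S"
  show "(\<mu> ^^ ?m) y \<in> S" using assms by (rule LeastI)
  show "?m \<le> k" using assms by (rule Least_le)
  show "(\<mu> ^^ j) y \<notin> S" if "j < ?m" for j using that by (rule not_less_Least)
qed (simp add: first_hit_def)

lemma first_hit_self: "y \<in> S \<Longrightarrow> first_hit \<mu> S y = y"
  using first_hit_eqI[where k = 0] by simp

lemma first_hit_funpow:
  assumes "(\<mu> ^^ k) y \<in> S" "\<And>j. j < n \<Longrightarrow> (\<mu> ^^ j) y \<notin> S"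
  shows "first_hit \<mu> S ((\<mu> ^^ n) y) = first_hit \<mu> S y"
proof -
  obtain m where m: "first_hit \<mu> S y = (\<mu> ^^ m) y" "(\<mu> ^^ m) y \<in> S"
    "\<And>j. j < m \<Longrightarrow> (\<mu> ^^ j) y \<notin> S"
    using first_hitE[OF assms(1)] by blast
  have "n \<le> m" using m(2) assms(2) not_le by blast
  have "(\<mu> ^^ (m - n)) ((\<mu> ^^ n) y) = (\<mu> ^^ (m - n + n)) y"
    by (simp add: funpow_add)
  then have shift: "(\<mu> ^^ (m - n)) ((\<mu> ^^ n) y) = (\<mu> ^^ m) y"
    using \<open>n \<le> m\<close> by simp
  have "first_hit \<mu> S ((\<mu> ^^ n) y) = (\<mu> ^^ (m - n)) ((\<mu> ^^ n) y)"
  proof (rule first_hit_eqI)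
    show "(\<mu> ^^ (m - n)) ((\<mu> ^^ n) y) \<in> S"
      using m(2) shift by simp
    show "(\<mu> ^^ j) ((\<mu> ^^ n) y) \<notin> S" if "j < m - n" for j
      using m(3)[of "j + n"] that by (simp add: funpow_add)
  qed
  then show ?thesis using m(1) shift by simp
qed

lemma first_hit_step:
  assumes "(\<mu> ^^ k) y \<in> S" "y \<notin> S"
  shows "first_hit \<mu> S (\<mu> y) = first_hit \<mu> S y"
  using first_hit_funpow[OF assms(1), of 1] assms(2) by simp

lemma first_hit_first_hit:
  assumes "(\<mu> ^^ k) y \<in> S" "S \<subseteq> T"
  shows "first_hit \<mu> S (first_hit \<mu> T y) = first_hit \<mu> S y"
proof -
  have hit: "(\<mu> ^^ k) y \<in> T" using assms by blast
  obtain m where m: "m \<le> k" "first_hit \<mu> T y = (\<mu> ^^ m) y" "(\<mu> ^^ m) y \<in> T"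
    "\<And>j. j < m \<Longrightarrow> (\<mu> ^^ j) y \<notin> T"
    using first_hitE[OF hit] by blast
  have "first_hit \<mu> S ((\<mu> ^^ m) y) = first_hit \<mu> S y"
    by (rule first_hit_funpow[OF assms(1)]) (use m(4) assms(2) in blast)
  then show ?thesis using m(2) by simp
qed

lemma first_hit_cong:
  assumes "\<And>z. z \<notin> S \<Longrightarrow> \<mu> z = \<nu> z"
  shows "first_hit \<mu> S y = first_hit \<nu> S y"
proof -
  have agree: "(\<nu> ^^ k) y = (\<mu> ^^ k) y" if "\<And>j. j < k \<Longrightarrow> (\<mu> ^^ j) y \<notin> S" for k
    using that by (induction k) (auto simp: assms)
  show ?thesis
  proof (cases "\<exists>k. (\<mu> ^^ k) y \<in> S")
    case True
    then obtain k where hit: "(\<mu> ^^ k) y \<in> S" by blast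
    obtain m where m: "m \<le> k" "first_hit \<mu> S y = (\<mu> ^^ m) y" "(\<mu> ^^ m) y \<in> S"
      "\<And>j. j < m \<Longrightarrow> (\<mu> ^^ j) y \<notin> S"
      using first_hitE[OF hit] by blast
    have "first_hit \<nu> S y = (\<nu> ^^ m) y"
      by (rule first_hit_eqI) (use m agree in auto)
    then show ?thesis using m agree by simp
  next
    case False
    then have "(\<nu> ^^ k) y = (\<mu> ^^ k) y" for k using agree by blast
    then show ?thesis unfolding first_hit_def by simp
  qed
qed

lemma restr_outside: "x \<notin> S \<Longrightarrow> restr \<mu> S x = x"
  by (simp add: restr_def)

lemma restr_funpow: "\<exists>n. restr \<mu> S x = (\<mu> ^^ n) x"
  by (cases "x \<in> S") (auto simp: restr_def intro: exI[where x = 0])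

lemma restr_closed:
  assumes "x \<in> S" "\<mu> x \<in> S"
  shows "restr \<mu> S x = \<mu> x"
proof -
  have "(LEAST k. 0 < k \<and> (\<mu> ^^ k) x \<in> S) = 1"
    by (rule Least_equality) (use assms in auto)
  then show ?thesis using assms(1) by (simp add: restr_def)
qed

lemma restr_eq_first_hit:
  assumes "finite B" "\<mu> permutes B" "x \<in> S"
  shows "restr \<mu> S x = first_hit \<mu> S (\<mu> x)"
proof -
  obtain n where "n > 0" "(\<mu> ^^ n) x = x" using permutes_funpow_return[OF assms(1,2)] .
  then have "(LEAST k. 0 < k \<and> (\<mu> ^^ k) x \<in> S) = Suc (LEAST k. (\<mu> ^^ k) (\<mu> x) \<in> S)"
    using Least_Suc[of "\<lambda>k. 0 < k \<and> (\<mu> ^^ k) x \<in> S" n] assms(3) by (simp add: funpow_swap1)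
  then show ?thesis using assms(3) by (simp add: restr_def first_hit_def funpow_swap1)
qed

lemma restr_first_return:
  assumes "finite B" "\<mu> permutes B" "x \<in> S"
  obtains m where "0 < m" "restr \<mu> S x = (\<mu> ^^ m) x" "(\<mu> ^^ m) x \<in> S"
    "\<And>j. 0 < j \<Longrightarrow> j < m \<Longrightarrow> (\<mu> ^^ j) x \<notin> S"
proof -
  obtain n where "(\<mu> ^^ n) (\<mu> x) = x" using permutes_funpow_back[OF assms(1,2)] .
  then have hit: "(\<mu> ^^ n) (\<mu> x) \<in> S" using assms(3) by simp
  obtain m where m: "m \<le> n" "first_hit \<mu> S (\<mu> x) = (\<mu> ^^ m) (\<mu> x)"
    "(\<mu> ^^ m) (\<mu> x) \<in> S" "\<And>j. j < m \<Longrightarrow> (\<mu> ^^ j) (\<mu> x) \<notin> S"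
    using first_hitE[OF hit] by blast
  show ?thesis
  proof (rule that[of "Suc m"])
    show "restr \<mu> S x = (\<mu> ^^ Suc m) x"
      using m(2) restr_eq_first_hit[OF assms] by (simp add: funpow_swap1)
    show "(\<mu> ^^ Suc m) x \<in> S" using m(3) by (simp add: funpow_swap1)
    show "(\<mu> ^^ j) x \<notin> S" if "0 < j" "j < Suc m" for j
    proof -
      obtain j' where "j = Suc j'" using \<open>0 < j\<close> by (cases j) auto
      then show ?thesis using m(4)[of j'] that(2) by (simp add: funpow_swap1)
    qed
  qed simp
qed

lemma restr_inj_on:
  assumes "finite B" "\<mu> permutes B"
  shows "inj_on (restr \<mu> S) S"
proof (rule inj_onI)
  have earlier_return: "x = x'"
    if "x \<in> S" "0 < m" "m \<le> m'" "(\<mu> ^^ m) x = (\<mu> ^^ m') x'"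
      "\<And>j. 0 < j \<Longrightarrow> j < m' \<Longrightarrow> (\<mu> ^^ j) x' \<notin> S" for x x' m m'
  proof -
    have "(\<mu> ^^ m) ((\<mu> ^^ (m' - m)) x') = (\<mu> ^^ (m + (m' - m))) x'"
      by (simp add: funpow_add)
    then have "(\<mu> ^^ m) x = (\<mu> ^^ m) ((\<mu> ^^ (m' - m)) x')"
      using that(3,4) by simp
    then have "x = (\<mu> ^^ (m' - m)) x'"
      using inj_fn[OF permutes_inj[OF assms(2)]] by (meson injD)
    then have "\<not> m < m'" using that(1,2) that(5)[of "m' - m"] by auto
    then show ?thesis using \<open>x = _\<close> by simp
  qed
  fix x x' assume "x \<in> S" "x' \<in> S" and eq: "restr \<mu> S x = restr \<mu> S x'"
  obtain m where m: "0 < m" "restr \<mu> S x = (\<mu> ^^ m) x" "(\<mu> ^^ m) x \<in> S"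
    "\<And>j. 0 < j \<Longrightarrow> j < m \<Longrightarrow> (\<mu> ^^ j) x \<notin> S"
    using restr_first_return[OF assms \<open>x \<in> S\<close>] by blast
  obtain m' where m': "0 < m'" "restr \<mu> S x' = (\<mu> ^^ m') x'" "(\<mu> ^^ m') x' \<in> S"
    "\<And>j. 0 < j \<Longrightarrow> j < m' \<Longrightarrow> (\<mu> ^^ j) x' \<notin> S"
    using restr_first_return[OF assms \<open>x' \<in> S\<close>] by blast
  have same: "(\<mu> ^^ m) x = (\<mu> ^^ m') x'" using eq m(2) m'(2) by simp
  show "x = x'"
  proof (cases "m \<le> m'")
    case True
    show ?thesis using earlier_return[OF \<open>x \<in> S\<close> m(1) True same m'(4)] .
  next
    case False
    then have "m' \<le> m" by simp
    show ?thesis using earlier_return[OF \<open>x' \<in> S\<close> m'(1) \<open>m' \<le> m\<close> same[symmetric] m(4)] by simp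
  qed
qed

lemma restr_permutes:
  assumes "finite B" "\<mu> permutes B" "S \<subseteq> B"
  shows "restr \<mu> S permutes S"
proof (rule inj_imp_permutes)
  show "inj_on (restr \<mu> S) S" using assms(1,2) by (rule restr_inj_on)
  show "finite S" using assms(1,3) by (rule finite_subset[rotated])
  show "restr \<mu> S x \<in> S" if x: "x \<in> S" for x
  proof -
    obtain m where "0 < m" "restr \<mu> S x = (\<mu> ^^ m) x" "(\<mu> ^^ m) x \<in> S"
      "\<And>j. 0 < j \<Longrightarrow> j < m \<Longrightarrow> (\<mu> ^^ j) x \<notin> S"
      using restr_first_return[OF assms(1,2) x] by blast
    then show ?thesis by simp
  qed
  show "restr \<mu> S x = x" if "x \<notin> S" for x
    using that by (rule restr_outside)
qed

lemma funpow_restr: "\<exists>m. (restr \<mu> T ^^ n) y = (\<mu> ^^ m) y"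
proof (induction n)
  case 0
  show ?case by (rule exI[of _ 0]) simp
next
  case (Suc n)
  then obtain m where m: "(restr \<mu> T ^^ n) y = (\<mu> ^^ m) y" by blast
  obtain k where k: "restr \<mu> T ((\<mu> ^^ m) y) = (\<mu> ^^ k) ((\<mu> ^^ m) y)"
    using restr_funpow[of \<mu> T "(\<mu> ^^ m) y"] by blast
  have "(restr \<mu> T ^^ Suc n) y = (\<mu> ^^ (k + m)) y" using m k by (simp add: funpow_add)
  then show ?case by blast
qed

lemma first_hit_restr:
  assumes "finite B" "\<mu> permutes B" "S \<subseteq> T" "T \<subseteq> B"
    and "y \<in> T" "(restr \<mu> T ^^ k) y \<in> S"
  shows "first_hit (restr \<mu> T) S y = first_hit \<mu> S y"
  using assms(5,6)
proof (induction k arbitrary: y)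
  case 0
  then show ?case by (simp add: first_hit_self)
next
  case (Suc k)
  let ?\<nu> = "restr \<mu> T"
  show ?case
  proof (cases "y \<in> S")
    case True
    then show ?thesis by (simp add: first_hit_self)
  next
    case False
    obtain m where "(?\<nu> ^^ Suc k) y = (\<mu> ^^ m) y"
      using funpow_restr[where n = "Suc k" and \<mu> = \<mu> and T = T] by blast
    then have hit: "(\<mu> ^^ m) y \<in> S" using Suc.prems(2) by simp
    with False obtain m' where hit': "(\<mu> ^^ m') (\<mu> y) \<in> S"
      by (cases m) (auto simp: funpow_swap1)
    have "?\<nu> y \<in> T"
      using restr_permutes[OF assms(1,2,4)] Suc.prems(1) by (simp add: permutes_in_image)
    moreover have "(?\<nu> ^^ k) (?\<nu> y) \<in> S" using Suc.prems(2) by (simp add: funpow_swap1)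
    ultimately have "first_hit ?\<nu> S (?\<nu> y) = first_hit \<mu> S (?\<nu> y)" by (rule Suc.IH)
    also have "\<dots> = first_hit \<mu> S (\<mu> y)"
      using restr_eq_first_hit[OF assms(1,2) Suc.prems(1)] first_hit_first_hit[OF hit' assms(3)]
      by simp
    also have "\<dots> = first_hit \<mu> S y" using hit False by (rule first_hit_step)
    finally show ?thesis using first_hit_step[OF Suc.prems(2) False] by simp
  qed
qed

lemma restr_restr:
  assumes "finite B" "\<mu> permutes B" "S \<subseteq> T" "T \<subseteq> B"
  shows "restr (restr \<mu> T) S = restr \<mu> S"
proof
  fix x
  let ?\<nu> = "restr \<mu> T"
  have \<nu>_T: "?\<nu> permutes T" using assms(1,2,4) by (rule restr_permutes)
  then have \<nu>: "?\<nu> permutes B" using assms(4) by (rule permutes_subset)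
  show "restr ?\<nu> S x = restr \<mu> S x"
  proof (cases "x \<in> S")
    case True
    obtain n where n: "(?\<nu> ^^ n) (?\<nu> x) = x" using permutes_funpow_back[OF assms(1) \<nu>] .
    obtain n' where n': "(\<mu> ^^ n') (\<mu> x) = x" using permutes_funpow_back[OF assms(1,2)] .
    have "?\<nu> x \<in> T" using True assms(3) \<nu>_T by (auto simp: permutes_in_image)
    have "restr ?\<nu> S x = first_hit ?\<nu> S (?\<nu> x)" using assms(1) \<nu> True by (rule restr_eq_first_hit)
    also have "\<dots> = first_hit \<mu> S (?\<nu> x)"
      using first_hit_restr[OF assms \<open>?\<nu> x \<in> T\<close>, of n] n True by simp
    also have "\<dots> = first_hit \<mu> S (\<mu> x)"
      using restr_eq_first_hit[OF assms(1,2), of x T] True assms(3)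
        first_hit_first_hit[OF _ assms(3), where k = n' and y = "\<mu> x"] n'
      by auto
    also have "\<dots> = restr \<mu> S x" using restr_eq_first_hit[OF assms(1,2) True] by simp
    finally show ?thesis .
  qed (simp add: restr_outside)
qed

lemma restr_comp_restr:
  assumes "finite B" "\<sigma> permutes B" "\<alpha> permutes B" "S \<subseteq> B" "\<And>x. x \<in> S \<Longrightarrow> \<alpha> x \<in> S"
  shows "restr \<sigma> S \<circ> restr \<alpha> S = restr (\<sigma> \<circ> restr \<alpha> S) S"
proof
  fix x
  have "restr \<alpha> S permutes B"
    using restr_permutes[OF assms(1,3,4)] assms(4) by (rule permutes_subset)
  then have \<rho>: "\<sigma> \<circ> restr \<alpha> S permutes B" using assms(2) by (rule permutes_compose)
  show "(restr \<sigma> S \<circ> restr \<alpha> S) x = restr (\<sigma> \<circ> restr \<alpha> S) S x"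
  proof (cases "x \<in> S")
    case True
    then have "restr \<alpha> S x = \<alpha> x" "\<alpha> x \<in> S"
      using restr_closed[where \<mu> = \<alpha>, OF True assms(5)[OF True]] assms(5) by auto
    moreover have "first_hit \<sigma> S y = first_hit (\<sigma> \<circ> restr \<alpha> S) S y" for y
      by (rule first_hit_cong) (simp add: restr_outside)
    ultimately show ?thesis
      using restr_eq_first_hit[OF assms(1,2)] restr_eq_first_hit[OF assms(1) \<rho> True] by simp
  qed (simp add: restr_outside)
qed

lemma restr_rtrancl_image:
  assumes "\<And>z. (h z, h (\<mu> z)) \<in> r\<^sup>*"
  shows "(h x, h (restr \<mu> S x)) \<in> r\<^sup>*"
proof -
  have "(h x, h ((\<mu> ^^ n) x)) \<in> r\<^sup>*" for n
    by (induction n) (auto intro: rtrancl_trans assms)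
  moreover obtain n where "restr \<mu> S x = (\<mu> ^^ n) x" using restr_funpow[of \<mu> S x] by blast
  ultimately show ?thesis by simp
qed

section \<open>Premaps\<close>

lemma perm_orbit_involution:
  assumes "a (a b) = b"
  shows "perm_orbit a b = {b, a b}"
proof -
  have "(a ^^ n) b \<in> {b, a b}" for n
    by (induction n) (use assms in auto)
  moreover have "b = (a ^^ 0) b" "a b = (a ^^ 1) b" by auto
  ultimately show ?thesis unfolding perm_orbit_def by blast
qed

lemma perm_orbit_self: "b \<in> perm_orbit p b"
proof -
  have "b = (p ^^ 0) b" by simp
  then show ?thesis unfolding perm_orbit_def by blast
qed

lemma perm_orbit_apply:
  assumes "finite B" "p permutes B"
  shows "perm_orbit p (p x) = perm_orbit p x"
proof
  show "perm_orbit p (p x) \<subseteq> perm_orbit p x"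
  proof
    fix y assume "y \<in> perm_orbit p (p x)"
    then obtain n where "y = (p ^^ n) (p x)" unfolding perm_orbit_def by blast
    then have "y = (p ^^ Suc n) x" by (simp add: funpow_swap1)
    then show "y \<in> perm_orbit p x" unfolding perm_orbit_def by blast
  qed
  obtain n where "(p ^^ n) (p x) = x" using permutes_funpow_back[OF assms] .
  then have "(p ^^ k) x = (p ^^ (k + n)) (p x)" for k by (simp add: funpow_add)
  then show "perm_orbit p x \<subseteq> perm_orbit p (p x)"
    unfolding perm_orbit_def by blast
qed

lemma darts_simps [simp]:
  "darts (dual N) = darts N" "darts (delete N g) = darts N - g" "darts (contract N g) = darts N - g"
  by (simp_all add: dual_def delete_def contract_def darts_def)

lemma vperm_simps [simp]:
  "vperm (dual N) = vperm N \<circ> eperm N"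
  "vperm (delete N g) = restr (vperm N) (darts N - g)"
  "vperm (contract N g) =
     restr (vperm N \<circ> eperm N) (darts N - g) \<circ> restr (eperm N) (darts N - g)"
  by (simp_all add: dual_def delete_def contract_def vperm_def)

lemma eperm_simps [simp]:
  "eperm (dual N) = eperm N"
  "eperm (delete N g) = restr (eperm N) (darts N - g)"
  "eperm (contract N g) = restr (eperm N) (darts N - g)"
  by (simp_all add: dual_def delete_def contract_def eperm_def)

text \<open>Premaps drop transitivity and fixed-point-freeness from \<^const>\<open>is_map\<close>; unlike maps,
  they are closed under deleting and contracting edges.\<close>

definition is_premap :: "'a cmap \<Rightarrow> bool" where
  "is_premap N \<longleftrightarrow> finite (darts N) \<and> vperm N permutes darts N \<and> eperm N permutes darts N
     \<and> (\<forall>x. eperm N (eperm N x) = x)"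

lemma is_map_imp_premap:
  assumes "is_map M"
  shows "is_premap M"
proof -
  have "finite (darts M)" "vperm M permutes darts M" and \<alpha>: "eperm M permutes darts M"
    and inv: "\<forall>b\<in>darts M. eperm M (eperm M b) = b"
    using assms unfolding is_map_def Let_def by auto
  moreover have "eperm M (eperm M x) = x" for x
    using inv permutes_not_in[OF \<alpha>] by (cases "x \<in> darts M") auto
  ultimately show ?thesis by (simp add: is_premap_def)
qed

lemma premap_dual: "is_premap N \<Longrightarrow> is_premap (dual N)"
  unfolding is_premap_def by (simp add: permutes_compose)

lemma premap_restr_eperm:
  assumes "is_premap N" "\<forall>x\<in>g. eperm N x \<in> g" "x \<in> darts N - g"
  shows "eperm N x \<in> darts N - g" "restr (eperm N) (darts N - g) x = eperm N x"
proof -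
  have \<alpha>: "eperm N permutes darts N" and inv: "eperm N (eperm N x) = x"
    using assms(1) unfolding is_premap_def by auto
  have "eperm N x \<notin> g" using assms(2,3) inv by force
  then show "eperm N x \<in> darts N - g"
    using assms(3) permutes_in_image[OF \<alpha>] by simp
  then show "restr (eperm N) (darts N - g) x = eperm N x" by (rule restr_closed[OF assms(3)])
qed

lemma premap_delete_contract:
  assumes "is_premap N" "\<forall>x\<in>g. eperm N x \<in> g"
  shows "is_premap (delete N g)" "is_premap (contract N g)"
proof -
  have fin: "finite (darts N - g)" using assms(1) by (simp add: is_premap_def)
  have perms: "restr (vperm N) (darts N - g) permutes darts N - g"
    "restr (vperm N \<circ> eperm N) (darts N - g) permutes darts N - g"
    "restr (eperm N) (darts N - g) permutes darts N - g"
    using assms(1) restr_permutes[of "darts N" _ "darts N - g"] permutes_compose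
    unfolding is_premap_def by blast+
  have "restr (eperm N) (darts N - g) (restr (eperm N) (darts N - g) x) = x" for x
  proof (cases "x \<in> darts N - g")
    case True
    then show ?thesis
      using premap_restr_eperm[OF assms True] premap_restr_eperm[OF assms] assms(1)
      by (simp add: is_premap_def)
  qed (simp add: restr_outside)
  then show "is_premap (delete N g)" "is_premap (contract N g)"
    using fin perms unfolding is_premap_def by (auto intro: permutes_compose)
qed

lemma premap_edgeE:
  assumes "is_premap N" "g \<in> edges N"
  obtains b where "b \<in> darts N" "g = {b, eperm N b}"
proof -
  obtain b where "b \<in> darts N" "g = perm_orbit (eperm N) b"
    using assms(2) unfolding edges_def by blast
  moreover have "eperm N (eperm N b) = b" using assms(1) by (simp add: is_premap_def)
  ultimately show ?thesis using that by (simp add: perm_orbit_involution)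
qed

lemma premap_edge_delete_contract:
  assumes "is_premap N" "\<forall>x\<in>g. eperm N x \<in> g" "h \<in> edges N" "h \<inter> g = {}"
  shows "h \<in> edges (delete N g)" "h \<in> edges (contract N g)"
proof -
  obtain b where b: "b \<in> darts N" "h = {b, eperm N b}" using premap_edgeE[OF assms(1,3)] .
  then have "b \<in> darts N - g" using assms(4) by blast
  have "restr (eperm N) (darts N - g) (restr (eperm N) (darts N - g) b) = b"
    using premap_restr_eperm[OF assms(1,2)] \<open>b \<in> darts N - g\<close> assms(1)
    by (simp add: is_premap_def)
  then have "perm_orbit (restr (eperm N) (darts N - g)) b = h"
    using perm_orbit_involution[of "restr (eperm N) (darts N - g)" b]
      premap_restr_eperm(2)[OF assms(1,2) \<open>b \<in> darts N - g\<close>] b(2)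
    by simp
  then show "h \<in> edges (delete N g)" "h \<in> edges (contract N g)"
    using \<open>b \<in> darts N - g\<close> unfolding edges_def by auto
qed

lemma premap_edge_closed:
  assumes "is_premap N" "g \<in> edges N" "x \<in> g"
  shows "eperm N x \<in> g" "x \<in> darts N"
proof -
  obtain b where "b \<in> darts N" "g = {b, eperm N b}" using premap_edgeE[OF assms(1,2)] .
  moreover have "eperm N b \<in> darts N" "eperm N (eperm N b) = b"
    using assms(1) calculation(1) by (simp_all add: is_premap_def permutes_in_image)
  ultimately show "eperm N x \<in> g" "x \<in> darts N" using assms(3) by auto
qed

lemma premap_edges_disjoint:
  assumes "is_premap N" "g \<in> edges N" "h \<in> edges N" "g \<noteq> h"
  shows "g \<inter> h = {}"
proof -
  have inv: "eperm N (eperm N x) = x" for x using assms(1) by (simp add: is_premap_def)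
  then have inj: "eperm N x = eperm N y \<Longrightarrow> x = y" for x y by metis
  obtain b c where "g = {b, eperm N b}" "h = {c, eperm N c}"
    using premap_edgeE[OF assms(1)] assms(2,3) by metis
  then show ?thesis using assms(4) inv inj by auto
qed

section \<open>Connectivity through darts\<close>

lemma rtrancl_symcl_image:
  assumes "\<And>u w. (u, w) \<in> r \<Longrightarrow> (h u, h w) \<in> (s \<union> s\<inverse>)\<^sup>*" "(x, y) \<in> (r \<union> r\<inverse>)\<^sup>*"
  shows "(h x, h y) \<in> (s \<union> s\<inverse>)\<^sup>*"
  using assms(2)
proof (induction rule: rtrancl_induct)
  case (step y z)
  have "sym ((s \<union> s\<inverse>)\<^sup>*)" by (simp add: sym_Un_converse sym_rtrancl)
  then have "(h y, h z) \<in> (s \<union> s\<inverse>)\<^sup>*" using step.hyps(2) assms(1) by (auto dest: symD)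
  then show ?case using step.IH by (rule rtrancl_trans[rotated])
qed simp

lemma rtrancl_symcl_mono:
  assumes "\<And>u w. (u, w) \<in> r \<Longrightarrow> (u, w) \<in> (s \<union> s\<inverse>)\<^sup>*" "(x, y) \<in> (r \<union> r\<inverse>)\<^sup>*"
  shows "(x, y) \<in> (s \<union> s\<inverse>)\<^sup>*"
  using rtrancl_symcl_image[of r "\<lambda>x. x" s x y] assms by simp

definition dart_step :: "'a cmap \<Rightarrow> 'a set \<Rightarrow> ('a \<times> 'a) set" where
  "dart_step N g = {(x, vperm N x) | x. x \<in> darts N} \<union> {(x, eperm N x) | x. x \<in> darts N - g}"

abbreviation dart_conn :: "'a cmap \<Rightarrow> 'a set \<Rightarrow> ('a \<times> 'a) set" where
  "dart_conn N g \<equiv> (dart_step N g \<union> (dart_step N g)\<inverse>)\<^sup>*"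

definition dart_connected :: "'a cmap \<Rightarrow> 'a set \<Rightarrow> bool" where
  "dart_connected N g \<longleftrightarrow> (\<forall>x\<in>darts N. \<forall>y\<in>darts N. (x, y) \<in> dart_conn N g)"

lemma dart_stepI:
  "x \<in> darts N \<Longrightarrow> (x, vperm N x) \<in> dart_step N g"
  "x \<in> darts N \<Longrightarrow> x \<notin> g \<Longrightarrow> (x, eperm N x) \<in> dart_step N g"
  unfolding dart_step_def by blast+

lemma dart_stepE:
  assumes "(x, y) \<in> dart_step N g"
  obtains "x \<in> darts N" "y = vperm N x" | "x \<in> darts N" "x \<notin> g" "y = eperm N x"
  using assms unfolding dart_step_def by blast

lemma dart_connected_imp_connected_without:
  assumes "is_premap N" "dart_connected N g"
  shows "connected_without N g"
proof -
  let ?O = "perm_orbit (vperm N)" and ?adj = "adj_without N g"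
  have "sym ?adj" unfolding sym_def adj_without_def by blast
  then have adj_symcl: "?adj \<union> ?adj\<inverse> = ?adj" by (simp add: sym_conv_converse_eq)
  have "(?O u, ?O w) \<in> (?adj \<union> ?adj\<inverse>)\<^sup>*" if "(u, w) \<in> dart_step N g" for u w
    using that
  proof (cases rule: dart_stepE)
    case 1
    have "finite (darts N)" "vperm N permutes darts N"
      using assms(1) by (simp_all add: is_premap_def)
    then have "?O w = ?O u" using 1 by (simp add: perm_orbit_apply)
    then show ?thesis by simp
  next
    case 2
    let ?e = "perm_orbit (eperm N) u"
    have "w \<in> darts N" using 2 assms(1) by (simp add: is_premap_def permutes_in_image)
    have "eperm N (eperm N u) = u" using assms(1) by (simp add: is_premap_def)
    then have "?e = {u, w}" using 2 perm_orbit_involution by simp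
    moreover have "?e \<in> edges N" using 2 unfolding edges_def by blast
    ultimately have "?e \<in> edges N - {g}" "u \<in> ?e \<inter> ?O u" "w \<in> ?e \<inter> ?O w"
      using 2 perm_orbit_self by auto
    moreover have "?O u \<in> vertices N" "?O w \<in> vertices N"
      using 2 \<open>w \<in> darts N\<close> unfolding vertices_def by auto
    ultimately have "(?O u, ?O w) \<in> ?adj" unfolding adj_without_def by blast
    then show ?thesis by blast
  qed
  then have "(?O x, ?O y) \<in> ?adj\<^sup>*" if "x \<in> darts N" "y \<in> darts N" for x y
    using rtrancl_symcl_image assms(2) that adj_symcl unfolding dart_connected_def by metis
  then show ?thesis unfolding connected_without_def vertices_def by blast
qed

lemma dart_conn_sym: "(x, y) \<in> dart_conn N g \<Longrightarrow> (y, x) \<in> dart_conn N g"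
  by (rule symD[OF sym_rtrancl[OF sym_Un_converse]])

lemma dart_conn_vertex:
  assumes "is_premap N" "v \<in> vertices N" "x \<in> v" "y \<in> v"
  shows "(x, y) \<in> dart_conn N g"
proof -
  have \<sigma>: "vperm N permutes darts N" using assms(1) by (simp add: is_premap_def)
  obtain b where b: "b \<in> darts N" "v = perm_orbit (vperm N) b"
    using assms(2) unfolding vertices_def by blast
  have "(vperm N ^^ n) b \<in> darts N \<and> (b, (vperm N ^^ n) b) \<in> dart_conn N g" for n
  proof (induction n)
    case (Suc n)
    then have "((vperm N ^^ n) b, (vperm N ^^ Suc n) b) \<in> dart_step N g"
      by (simp add: dart_stepI)
    then have "(b, (vperm N ^^ Suc n) b) \<in> dart_conn N g"
      using Suc rtrancl_into_rtrancl[of b "(vperm N ^^ n) b"] by blast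
    then show ?case using Suc permutes_in_image[OF \<sigma>] by simp
  qed (simp add: b(1))
  moreover obtain i j where "x = (vperm N ^^ i) b" "y = (vperm N ^^ j) b"
    using assms(3,4) b(2) unfolding perm_orbit_def by blast
  ultimately have "(b, x) \<in> dart_conn N g" "(b, y) \<in> dart_conn N g" by blast+
  then show ?thesis using dart_conn_sym rtrancl_trans by metis
qed

lemma dart_conn_edge:
  assumes "is_premap N" "g \<in> edges N" "e' \<in> edges N - {g}" "x \<in> e'" "y \<in> e'"
  shows "(x, y) \<in> dart_conn N g"
proof -
  have inv: "\<And>x. eperm N (eperm N x) = x" using assms(1) by (simp add: is_premap_def)
  obtain b where b: "b \<in> darts N" "e' = {b, eperm N b}"
    using premap_edgeE[OF assms(1)] assms(3) by blast
  obtain c where c: "g = {c, eperm N c}" using premap_edgeE[OF assms(1,2)] by blast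
  have e'_x: "e' = {x, eperm N x}" using b(2) assms(4) inv by auto
  then have "x \<notin> g" using c assms(3) inv by auto
  moreover have "x \<in> darts N" using b assms(1,4)
    by (auto simp: is_premap_def permutes_in_image)
  ultimately have "(x, eperm N x) \<in> dart_step N g" by (simp add: dart_stepI)
  then show ?thesis using e'_x assms(5) by auto
qed

lemma connected_without_imp_dart_connected:
  assumes "is_premap N" "g \<in> edges N" "connected_without N g"
  shows "dart_connected N g"
proof -
  have along_path: "\<forall>x\<in>v. \<forall>y\<in>w. (x, y) \<in> dart_conn N g"
    if "(v, w) \<in> (adj_without N g)\<^sup>*" "v \<in> vertices N" for v w
    using that
  proof (induction rule: rtrancl_induct)
    case base
    then show ?case using dart_conn_vertex[OF assms(1)] by blast
  next
    case (step u w)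
    then obtain e' z z' where "w \<in> vertices N" "e' \<in> edges N - {g}"
      and z: "z \<in> e'" "z \<in> u" and z': "z' \<in> e'" "z' \<in> w"
      unfolding adj_without_def by blast
    show ?case
    proof (intro ballI)
      fix x y assume "x \<in> v" "y \<in> w"
      have "(x, z) \<in> dart_conn N g" using step.IH step.prems \<open>x \<in> v\<close> z(2) by blast
      moreover have "(z, z') \<in> dart_conn N g"
        using dart_conn_edge[OF assms(1,2) \<open>e' \<in> _\<close> z(1) z'(1)] .
      moreover have "(z', y) \<in> dart_conn N g"
        using dart_conn_vertex[OF assms(1) \<open>w \<in> vertices N\<close> z'(2) \<open>y \<in> w\<close>] .
      ultimately show "(x, y) \<in> dart_conn N g" by (metis rtrancl_trans)
    qed
  qed
  show ?thesis unfolding dart_connected_def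
  proof (intro ballI)
    fix x y assume "x \<in> darts N" "y \<in> darts N"
    then have "perm_orbit (vperm N) x \<in> vertices N" "perm_orbit (vperm N) y \<in> vertices N"
      unfolding vertices_def by auto
    then have "(perm_orbit (vperm N) x, perm_orbit (vperm N) y) \<in> (adj_without N g)\<^sup>*"
      using assms(3) unfolding connected_without_def by blast
    then have "\<forall>a\<in>perm_orbit (vperm N) x. \<forall>c\<in>perm_orbit (vperm N) y. (a, c) \<in> dart_conn N g"
      using along_path \<open>perm_orbit (vperm N) x \<in> vertices N\<close> by blast
    then show "(x, y) \<in> dart_conn N g" using perm_orbit_self[of x] perm_orbit_self[of y] by blast
  qed
qed

lemma not_bridge_iff_dart_connected:
  assumes "is_premap N" "g \<in> edges N"
  shows "\<not> is_bridge N g \<longleftrightarrow> dart_connected N g"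
  unfolding is_bridge_def
  using connected_without_imp_dart_connected[OF assms]
    dart_connected_imp_connected_without[OF assms(1)] assms(2)
  by blast

lemma not_sep_loop_iff_dart_connected:
  assumes "is_premap N" "g \<in> edges N"
  shows "\<not> is_sep_loop N g \<longleftrightarrow> dart_connected (dual N) g"
proof -
  have "g \<in> edges (dual N)" using assms(2) by (simp add: edges_def)
  then show ?thesis
    using not_bridge_iff_dart_connected premap_dual[OF assms(1)] by (simp add: is_sep_loop_def)
qed

section \<open>Deletion and contraction commute\<close>

lemma cmap_eqI:
  "darts M = darts M' \<Longrightarrow> vperm M = vperm M' \<Longrightarrow> eperm M = eperm M' \<Longrightarrow> M = M'"
  unfolding darts_def vperm_def eperm_def by (simp add: prod_eq_iff)

lemma restr_eq_if_closed:
  assumes "\<And>x. x \<in> S \<Longrightarrow> \<alpha> x \<in> S"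
  shows "restr \<alpha> S z = (if z \<in> S then \<alpha> z else z)"
  using assms by (simp add: restr_closed restr_outside)

definition del_face_perm :: "'a cmap \<Rightarrow> 'a set \<Rightarrow> 'a \<Rightarrow> 'a" where
  "del_face_perm N g = vperm N \<circ> restr (eperm N) (darts N - g)"

definition con_vertex_perm :: "'a cmap \<Rightarrow> 'a set \<Rightarrow> 'a \<Rightarrow> 'a" where
  "con_vertex_perm N g = vperm N \<circ> eperm N \<circ> restr (eperm N) (darts N - g)"

context
  fixes N :: "'a cmap" and g :: "'a set"
  assumes premap: "is_premap N" and closed: "\<forall>x\<in>g. eperm N x \<in> g"
begin

private lemma premap_parts:
  "finite (darts N)" "vperm N permutes darts N" "eperm N permutes darts N"
  using premap by (simp_all add: is_premap_def)

private lemma restr_eperm_apply: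
  "restr (eperm N) (darts N - g) x = (if x \<in> darts N - g then eperm N x else x)"
  using premap_restr_eperm(1)[OF premap closed] by (rule restr_eq_if_closed)

lemma del_face_perm_apply:
  "del_face_perm N g x = (if x \<in> g then vperm N x else vperm N (eperm N x))"
  using premap permutes_not_in[of "eperm N" "darts N"]
  by (auto simp: del_face_perm_def restr_eperm_apply is_premap_def)

lemma con_vertex_perm_apply:
  "con_vertex_perm N g x = (if x \<in> g then vperm N (eperm N x) else vperm N x)"
  using premap permutes_not_in[of "eperm N" "darts N"]
  by (auto simp: con_vertex_perm_def restr_eperm_apply is_premap_def)

lemma del_face_perm_permutes: "del_face_perm N g permutes darts N"
  and con_vertex_perm_permutes: "con_vertex_perm N g permutes darts N"
proof -
  have "restr (eperm N) (darts N - g) permutes darts N - g"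
    using premap_parts(1,3) by (rule restr_permutes) blast
  then have "restr (eperm N) (darts N - g) permutes darts N"
    by (rule permutes_subset) blast
  then show "del_face_perm N g permutes darts N" "con_vertex_perm N g permutes darts N"
    using premap unfolding del_face_perm_def con_vertex_perm_def is_premap_def
    by (auto simp: comp_assoc intro!: permutes_compose)
qed

lemma vperm_dual_delete: "vperm (dual (delete N g)) = restr (del_face_perm N g) (darts N - g)"
  using restr_comp_restr[OF premap_parts _ premap_restr_eperm(1)[OF premap closed]]
  by (simp add: del_face_perm_def)

lemma vperm_contract: "vperm (contract N g) = restr (con_vertex_perm N g) (darts N - g)"
  using restr_comp_restr[OF premap_parts(1) permutes_compose[OF premap_parts(3,2)] premap_parts(3)
      _ premap_restr_eperm(1)[OF premap closed]]
  by (simp add: con_vertex_perm_def comp_assoc)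

end

lemma contract_delete_commute:
  assumes "is_premap N" "\<forall>x\<in>g. eperm N x \<in> g" "\<forall>x\<in>h. eperm N x \<in> h" "g \<inter> h = {}"
  shows "contract (delete N g) h = delete (contract N h) g"
proof -
  let ?B = "darts N" and ?\<alpha> = "eperm N"
  let ?D = "?B - g - h"
  have fin: "finite ?B" and \<alpha>: "?\<alpha> permutes ?B"
    using assms(1) by (simp_all add: is_premap_def)
  have closed_D: "\<And>x. x \<in> ?D \<Longrightarrow> ?\<alpha> x \<in> ?D"
    using premap_restr_eperm(1)[OF assms(1)] assms(2,3) by blast
  let ?\<phi> = "del_face_perm N g" and ?\<psi> = "con_vertex_perm N h"
  have "?\<phi> \<circ> restr ?\<alpha> ?D = ?\<psi>"
  proof
    fix z
    show "(?\<phi> \<circ> restr ?\<alpha> ?D) z = ?\<psi> z"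
      using assms restr_eq_if_closed[of ?D ?\<alpha> z, OF closed_D] closed_D permutes_not_in[OF \<alpha>]
      by (auto simp: del_face_perm_apply con_vertex_perm_apply is_premap_def)
  qed
  then have "restr ?\<phi> ?D \<circ> restr ?\<alpha> ?D = restr ?\<psi> ?D"
    using restr_comp_restr[OF fin del_face_perm_permutes[OF assms(1,2)] \<alpha> _ closed_D] by auto
  moreover have "restr (restr \<mu> (?B - k)) ?D = restr \<mu> ?D" if "\<mu> permutes ?B" "k = g \<or> k = h"
    for \<mu> k
    using fin that(1) by (rule restr_restr) (use that(2) in auto)
  moreover have "?B - h - g = ?D" by blast
  moreover have "restr (vperm N) (?B - g) \<circ> restr ?\<alpha> (?B - g) = restr ?\<phi> (?B - g)"
    using vperm_dual_delete[OF assms(1,2)] by simp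
  moreover have "restr (vperm N \<circ> ?\<alpha>) (?B - h) \<circ> restr ?\<alpha> (?B - h) = restr ?\<psi> (?B - h)"
    using vperm_contract[OF assms(1,3)] by simp
  ultimately show ?thesis
    using \<alpha> del_face_perm_permutes[OF assms(1,2)] con_vertex_perm_permutes[OF assms(1,3)]
    by (intro cmap_eqI) simp_all
qed

section \<open>Separating loops and bridges\<close>

locale delete_contract_defined =
  fixes M :: "'a cmap" and e f :: "'a set"
  assumes map: "is_map M"
    and e_edge: "e \<in> edges M" and f_edge: "f \<in> edges M" and distinct: "e \<noteq> f"
    and f_not_sep_loop: "\<not> is_sep_loop (delete M e) f"
begin

abbreviation "B \<equiv> darts M"
abbreviation "\<sigma> \<equiv> vperm M"
abbreviation "\<alpha> \<equiv> eperm M"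

lemma premap: "is_premap M"
  using map by (rule is_map_imp_premap)

lemma \<sigma>_permutes: "\<sigma> permutes B" and \<alpha>_permutes: "\<alpha> permutes B" and \<alpha>_\<alpha>: "\<alpha> (\<alpha> x) = x"
  using premap by (simp_all add: is_premap_def)

lemma e_closed: "\<forall>x\<in>e. \<alpha> x \<in> e" and f_closed: "\<forall>x\<in>f. \<alpha> x \<in> f"
  using premap_edge_closed(1)[OF premap e_edge] premap_edge_closed(1)[OF premap f_edge] by blast+

lemma e_darts: "e \<subseteq> B" and f_darts: "f \<subseteq> B"
  using premap_edge_closed(2)[OF premap e_edge] premap_edge_closed(2)[OF premap f_edge] by blast+

lemma e_f_disjoint: "e \<inter> f = {}"
  using premap e_edge f_edge distinct by (rule premap_edges_disjoint)

lemma dual_step_vertex: "x \<in> B \<Longrightarrow> (x, \<sigma> (\<alpha> x)) \<in> dart_step (dual M) f"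
  and dual_step_edge: "x \<in> B \<Longrightarrow> x \<notin> f \<Longrightarrow> (x, \<alpha> x) \<in> dart_step (dual M) f"
  using dart_stepI[of x "dual M" f] by simp_all

lemma dart_connected_dual_delete: "dart_connected (dual (delete M e)) f"
proof -
  have "f \<in> edges (delete M e)"
    using premap_edge_delete_contract(1)[OF premap e_closed f_edge] e_f_disjoint by blast
  then show ?thesis
    using f_not_sep_loop
      not_sep_loop_iff_dart_connected[OF premap_delete_contract(1)[OF premap e_closed]]
    by blast
qed

lemma dual_dart_conn_del_face_perm: "(z, del_face_perm M e z) \<in> dart_conn (dual M) f"
proof (cases "z \<in> e")
  case True
  then have "(z, \<alpha> z) \<in> dart_step (dual M) f" "(\<alpha> z, \<sigma> (\<alpha> (\<alpha> z))) \<in> dart_step (dual M) f"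
    using dual_step_vertex dual_step_edge e_darts e_f_disjoint
      permutes_in_image[OF \<alpha>_permutes] by auto
  then have "(z, \<sigma> z) \<in> dart_conn (dual M) f"
    using rtrancl_into_rtrancl[OF r_into_rtrancl] \<alpha>_\<alpha> by (metis UnI1)
  then show ?thesis using True del_face_perm_apply[OF premap e_closed] by simp
next
  case False
  then have "del_face_perm M e z = \<sigma> (\<alpha> z)" using del_face_perm_apply[OF premap e_closed] by simp
  moreover have "\<sigma> (\<alpha> z) = z" if "z \<notin> B"
    using that permutes_not_in[OF \<alpha>_permutes] permutes_not_in[OF \<sigma>_permutes] by simp
  ultimately show ?thesis using dual_step_vertex[of z] by (cases "z \<in> B") auto
qed

lemma dual_dart_conn_delete_darts:
  assumes "x \<in> B - e" "y \<in> B - e"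
  shows "(x, y) \<in> dart_conn (dual M) f"
proof -
  have "(u, w) \<in> dart_conn (dual M) f" if "(u, w) \<in> dart_step (dual (delete M e)) f" for u w
    using that
  proof (cases rule: dart_stepE)
    case 1
    then have "w = restr (del_face_perm M e) (B - e) u"
      using fun_cong[OF vperm_dual_delete[OF premap e_closed], of u] by simp
    then show ?thesis
      using restr_rtrancl_image[where h = "\<lambda>x. x", OF dual_dart_conn_del_face_perm] by simp
  next
    case 2
    then show ?thesis
      using dual_step_edge[of u] premap_restr_eperm(2)[OF premap e_closed] by auto
  qed
  moreover have "(x, y) \<in> dart_conn (dual (delete M e)) f"
    using dart_connected_dual_delete assms unfolding dart_connected_def by simp
  ultimately show ?thesis by (rule rtrancl_symcl_mono)
qed

lemma dual_dart_conn_edge: "(x, \<alpha> x) \<in> dart_conn (dual M) f"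
proof (cases "x \<in> f")
  case True
  then show ?thesis
    using dual_dart_conn_delete_darts f_closed f_darts e_f_disjoint by blast
next
  case False
  then show ?thesis
    using dual_step_edge[of x] permutes_not_in[OF \<alpha>_permutes, of x] by (cases "x \<in> B") auto
qed

lemma dual_dart_conn_vertex: "(x, \<sigma> x) \<in> dart_conn (dual M) f"
proof (cases "x \<in> B")
  case True
  then have "(\<alpha> x, \<sigma> (\<alpha> (\<alpha> x))) \<in> dart_step (dual M) f"
    using dual_step_vertex permutes_in_image[OF \<alpha>_permutes] by blast
  then show ?thesis
    using rtrancl_into_rtrancl[OF dual_dart_conn_edge[of x]] \<alpha>_\<alpha> by (metis UnI1)
next
  case False
  then show ?thesis using permutes_not_in[OF \<sigma>_permutes] by simp
qed

lemma dart_connected_dual: "dart_connected (dual M) f"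
proof -
  let ?r = "{(b, \<sigma> b) | b. True} \<union> {(b, \<alpha> b) | b. True}"
  have "gen_step \<sigma> \<alpha> = ?r \<union> ?r\<inverse>" unfolding gen_step_def by blast
  then have "(x, y) \<in> (?r \<union> ?r\<inverse>)\<^sup>*" if "x \<in> B" "y \<in> B" for x y
    using map that unfolding is_map_def Let_def by simp
  moreover have "(u, w) \<in> dart_conn (dual M) f" if "(u, w) \<in> ?r" for u w
    using that dual_dart_conn_edge dual_dart_conn_vertex by blast
  ultimately have "(x, y) \<in> dart_conn (dual M) f" if "x \<in> B" "y \<in> B" for x y
    using that by (blast intro: rtrancl_symcl_mono)
  then show ?thesis unfolding dart_connected_def by simp
qed

theorem not_sep_loop: "\<not> is_sep_loop M f"
  using not_sep_loop_iff_dart_connected[OF premap f_edge] dart_connected_dual by blast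

abbreviation "\<psi> \<equiv> con_vertex_perm M f"

lemma \<psi>_permutes: "\<psi> permutes B"
  using premap f_closed by (rule con_vertex_perm_permutes)

lemma \<psi>_apply: "\<psi> x = (if x \<in> f then \<sigma> (\<alpha> x) else \<sigma> x)"
  using premap f_closed by (rule con_vertex_perm_apply)

text \<open>\<open>f_trapped\<close> is closed under the steps of \<open>dart_conn (dual M) f\<close>, which connect all
  darts, and misses the darts of \<open>e\<close>; hence it is empty.\<close>

definition f_trapped :: "'a set" where
  "f_trapped = {x \<in> B. \<forall>k. (\<psi> ^^ k) x \<in> f}"

lemma f_trapped_in_f: "x \<in> f_trapped \<Longrightarrow> x \<in> f"
proof -
  assume "x \<in> f_trapped"
  then have "(\<psi> ^^ 0) x \<in> f" unfolding f_trapped_def by blast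
  then show "x \<in> f" by simp
qed

lemma f_trapped_forward:
  assumes "(u, w) \<in> dart_step (dual M) f" "u \<in> f_trapped"
  shows "w \<in> f_trapped"
  using assms(1)
proof (cases rule: dart_stepE)
  case 1
  then have "w = \<psi> u" using f_trapped_in_f[OF assms(2)] \<psi>_apply by simp
  then have "(\<psi> ^^ k) w = (\<psi> ^^ Suc k) u" for k by (simp add: funpow_swap1)
  moreover have "(\<psi> ^^ Suc k) u \<in> f" for k using assms(2) unfolding f_trapped_def by blast
  moreover have "w \<in> B"
    using assms(2) permutes_in_image[OF \<psi>_permutes] \<open>w = \<psi> u\<close> unfolding f_trapped_def by simp
  ultimately show ?thesis unfolding f_trapped_def by simp
qed (use f_trapped_in_f[OF assms(2)] in simp)

lemma f_trapped_backward:
  assumes "(u, w) \<in> dart_step (dual M) f" "w \<in> f_trapped"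
  shows "u \<in> f_trapped"
  using assms(1)
proof (cases rule: dart_stepE)
  case 1
  have "finite B" using premap by (simp add: is_premap_def)
  obtain N where N: "\<psi> ^^ N = id" "N > 0" using permutes_funpow_id[OF \<open>finite B\<close> \<psi>_permutes] .
  define p where "p = (\<psi> ^^ (N - 1)) w"
  have shift: "(\<psi> ^^ k) p = (\<psi> ^^ (k + (N - 1))) w" for k unfolding p_def by (simp add: funpow_add)
  have "\<psi> p = (\<psi> ^^ N) w" using shift[of 1] N(2) by simp
  then have "\<psi> p = w" using N(1) by simp
  have "(\<psi> ^^ j) w \<in> f" for j using assms(2) unfolding f_trapped_def by simp
  moreover have "p \<in> B"
    using assms(2) permutes_in_funpow_image[OF \<psi>_permutes, of w] unfolding f_trapped_def p_def
    by simp
  ultimately have "p \<in> f_trapped" using shift unfolding f_trapped_def by simp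
  then have "\<sigma> (\<alpha> p) = \<sigma> (\<alpha> u)" using 1 \<open>\<psi> p = w\<close> f_trapped_in_f \<psi>_apply by simp
  then have "\<alpha> p = \<alpha> u" by (rule injD[OF permutes_inj[OF \<sigma>_permutes]])
  then have "p = u" by (metis \<alpha>_\<alpha>)
  then show ?thesis using \<open>p \<in> f_trapped\<close> by simp
next
  case 2
  have "\<alpha> w \<in> f" using f_closed f_trapped_in_f[OF assms(2)] by blast
  then show ?thesis using 2 \<alpha>_\<alpha> by simp
qed

lemma \<psi>_orbit_leaves_f:
  assumes "y \<in> B"
  shows "\<exists>k. (\<psi> ^^ k) y \<in> B - f"
proof (rule ccontr)
  assume "\<nexists>k. (\<psi> ^^ k) y \<in> B - f"
  then have "y \<in> f_trapped"
    using assms permutes_in_funpow_image[OF \<psi>_permutes] unfolding f_trapped_def by blast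
  have "(dart_step (dual M) f \<union> (dart_step (dual M) f)\<inverse>) `` f_trapped \<subseteq> f_trapped"
    using f_trapped_forward f_trapped_backward by blast
  then have closed: "dart_conn (dual M) f `` f_trapped = f_trapped" by (rule Image_closed_trancl)
  obtain a where "a \<in> e" using premap_edgeE[OF premap e_edge] by blast
  then have "(y, a) \<in> dart_conn (dual M) f"
    using dart_connected_dual assms e_darts unfolding dart_connected_def by auto
  then have "a \<in> f_trapped" using closed \<open>y \<in> f_trapped\<close> by blast
  then show False using f_trapped_in_f \<open>a \<in> e\<close> e_f_disjoint by blast
qed

definition con_proj :: "'a \<Rightarrow> 'a" where
  "con_proj = first_hit \<psi> (B - f)"

lemma con_proj_outside_f: "x \<in> B - f \<Longrightarrow> con_proj x = x"
  unfolding con_proj_def by (rule first_hit_self)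

lemma con_proj_\<psi>: "x \<in> f \<Longrightarrow> con_proj (\<psi> x) = con_proj x"
  unfolding con_proj_def using \<psi>_orbit_leaves_f f_darts by (blast intro: first_hit_step)

lemma contract_step_vertex: "x \<in> B - f \<Longrightarrow> (x, con_proj (\<psi> x)) \<in> dart_step (contract M f) e"
proof -
  assume x: "x \<in> B - f"
  have "finite B" using premap by (simp add: is_premap_def)
  then have "vperm (contract M f) x = con_proj (\<psi> x)"
    using vperm_contract[OF premap f_closed] restr_eq_first_hit[OF _ \<psi>_permutes x]
    unfolding con_proj_def by simp
  then show ?thesis using dart_stepI(1)[of x "contract M f" e] x by simp
qed

lemma contract_step_edge: "x \<in> B - e - f \<Longrightarrow> (x, \<alpha> x) \<in> dart_step (contract M f) e"
  using dart_stepI(2)[of x "contract M f" e] premap_restr_eperm(2)[OF premap f_closed, of x] by simp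

lemma contract_dart_conn_del_face_perm:
  "(con_proj z, con_proj (del_face_perm M e z)) \<in> dart_conn (contract M f) e"
proof -
  have \<phi>_e: "del_face_perm M e z = \<sigma> z" if "z \<in> e"
    using that del_face_perm_apply[OF premap e_closed] by simp
  have \<phi>_not_e: "del_face_perm M e z = \<sigma> (\<alpha> z)" if "z \<notin> e"
    using that del_face_perm_apply[OF premap e_closed] by simp
  consider "z \<in> e" | "z \<in> f" | "z \<in> B - e - f" | "z \<notin> B" by blast
  then show ?thesis
  proof cases
    case 1
    then have "z \<in> B - f" using e_darts e_f_disjoint by blast
    moreover have "del_face_perm M e z = \<psi> z"
      using 1 \<phi>_e \<psi>_apply \<open>z \<in> B - f\<close> by simp
    ultimately show ?thesis using contract_step_vertex con_proj_outside_f by auto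
  next
    case 2
    then have "del_face_perm M e z = \<psi> z"
      using e_f_disjoint \<phi>_not_e \<psi>_apply by auto
    then show ?thesis using con_proj_\<psi> 2 by simp
  next
    case 3
    then have "\<alpha> z \<in> B - e - f" using premap_restr_eperm(1)[OF premap e_closed]
      premap_restr_eperm(1)[OF premap f_closed] by blast
    then have "(z, \<alpha> z) \<in> dart_step (contract M f) e"
      "(\<alpha> z, con_proj (\<psi> (\<alpha> z))) \<in> dart_step (contract M f) e"
      using 3 contract_step_edge contract_step_vertex by auto
    then have "(z, con_proj (\<psi> (\<alpha> z))) \<in> dart_conn (contract M f) e"
      using rtrancl_into_rtrancl[OF r_into_rtrancl] by (metis UnI1)
    moreover have "del_face_perm M e z = \<psi> (\<alpha> z)"
      using 3 \<open>\<alpha> z \<in> B - e - f\<close> \<phi>_not_e \<psi>_apply by simp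
    ultimately show ?thesis using 3 con_proj_outside_f by simp
  next
    case 4
    then have "z \<notin> e" using e_darts by blast
    then have "del_face_perm M e z = z"
      using 4 \<phi>_not_e permutes_not_in[OF \<sigma>_permutes] permutes_not_in[OF \<alpha>_permutes] by simp
    then show ?thesis by simp
  qed
qed

lemma contract_dart_conn_delete_darts:
  assumes "x \<in> B - e" "y \<in> B - e"
  shows "(con_proj x, con_proj y) \<in> dart_conn (contract M f) e"
proof -
  have "(con_proj u, con_proj w) \<in> dart_conn (contract M f) e"
    if "(u, w) \<in> dart_step (dual (delete M e)) f" for u w
    using that
  proof (cases rule: dart_stepE)
    case 1
    then have "w = restr (del_face_perm M e) (B - e) u"
      using fun_cong[OF vperm_dual_delete[OF premap e_closed], of u] by simp
    then show ?thesis using restr_rtrancl_image[where h = con_proj and \<mu> = "del_face_perm M e",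
        OF contract_dart_conn_del_face_perm] by simp
  next
    case 2
    then have "u \<in> B - e - f" "w = \<alpha> u" "\<alpha> u \<in> B - f"
      using premap_restr_eperm[OF premap e_closed] premap_restr_eperm(1)[OF premap f_closed]
      by auto
    then show ?thesis using contract_step_edge con_proj_outside_f by auto
  qed
  moreover have "(x, y) \<in> dart_conn (dual (delete M e)) f"
    using dart_connected_dual_delete assms unfolding dart_connected_def by simp
  ultimately show ?thesis by (rule rtrancl_symcl_image)
qed

lemma contract_dart_conn_edge:
  assumes "x \<in> B - e"
  shows "(con_proj x, con_proj (\<alpha> x)) \<in> dart_conn (contract M f) e"
proof (cases "x \<in> f")
  case True
  then have "\<alpha> x \<in> B - e" using f_closed f_darts e_f_disjoint by blast
  then show ?thesis using contract_dart_conn_delete_darts assms by blast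
next
  case False
  then have "\<alpha> x \<in> B - f" using assms premap_restr_eperm(1)[OF premap f_closed] by blast
  then show ?thesis
    using contract_step_edge[of x] assms False con_proj_outside_f by auto
qed

lemma contract_dart_conn_vertex:
  assumes "x \<in> B"
  shows "(con_proj x, con_proj (\<sigma> x)) \<in> dart_conn (contract M f) e"
proof (cases "x \<in> f")
  case True
  then have "\<alpha> x \<in> f" using f_closed by blast
  then have "con_proj (\<sigma> x) = con_proj (\<alpha> x)"
    using con_proj_\<psi>[of "\<alpha> x"] \<psi>_apply \<alpha>_\<alpha> by simp
  then show ?thesis using contract_dart_conn_edge assms True e_f_disjoint by auto
next
  case False
  then show ?thesis
    using contract_step_vertex[of x] assms \<psi>_apply con_proj_outside_f by auto
qed

theorem not_bridge_contract:
  assumes "\<not> is_bridge M e"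
  shows "\<not> is_bridge (contract M f) e"
proof -
  have "dart_connected M e" using assms not_bridge_iff_dart_connected[OF premap e_edge] by blast
  have step: "(con_proj u, con_proj w) \<in> dart_conn (contract M f) e"
    if "(u, w) \<in> dart_step M e" for u w
    using that
    by (cases rule: dart_stepE) (simp_all add: contract_dart_conn_vertex contract_dart_conn_edge)
  have "(x, y) \<in> dart_conn (contract M f) e" if "x \<in> B - f" "y \<in> B - f" for x y
  proof -
    have "(x, y) \<in> dart_conn M e"
      using \<open>dart_connected M e\<close> that unfolding dart_connected_def by blast
    with step have "(con_proj x, con_proj y) \<in> dart_conn (contract M f) e"
      by (rule rtrancl_symcl_image)
    then show ?thesis using that con_proj_outside_f by simp
  qed
  then have "dart_connected (contract M f) e" unfolding dart_connected_def by simp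
  moreover have "e \<in> edges (contract M f)"
    using premap_edge_delete_contract(2)[OF premap f_closed e_edge] e_f_disjoint by blast
  ultimately show ?thesis
    using not_bridge_iff_dart_connected premap_delete_contract(2)[OF premap f_closed] by blast
qed

end

theorem lemma6:
  fixes M :: "'a cmap" and e f :: "'a set"
  assumes "is_map M"
    and "e \<in> edges M" and "f \<in> edges M" and "e \<noteq> f"
    and "\<not> is_bridge M e"
    and "\<not> is_sep_loop (delete M e) f"
  shows "\<not> is_sep_loop M f \<and> \<not> is_bridge (contract M f) e
         \<and> contract (delete M e) f = delete (contract M f) e"
proof -
  interpret delete_contract_defined M e f
    using assms(1-4,6) by unfold_locales
  have "contract (delete M e) f = delete (contract M f) e"
    using premap e_closed f_closed e_f_disjoint by (rule contract_delete_commute)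
  then show ?thesis using not_sep_loop not_bridge_contract[OF assms(5)] by blast
qed

end
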